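(* For a squarefree integer $d$, the curve $H^d: d y^2=(x^2-x-3)(x^2+2x-12)$ is everywhere locally solvable (has points over $\mathbb{R}$ and over $\mathbb{Q}_p$ for every prime $p$) if and only if every prime $p\mid d$ satisfies $(\tfrac{p}{13})=1$ or $p=13$.
   Context: $(\tfrac{p}{13})$ is the Legendre symbol. Local solvability refers to the smooth projective model of the genus one curve $d y^2=(x^2-x-3)(x^2+2x-12)$. *)

theory Defs
  imports "HOL-Number_Theory.Number_Theory" "HOL-Computational_Algebra.Squarefree" Complex_Main
begin

text \<open>The smooth projective model of d y^2 = F(x) is the curve
  d Y^2 = F(X,Z) in the weighted projective plane P(1,2,1),
  points being triples with (X,Z) nonzero, modulo (X,Y,Z) ~ (l X, l^2 Y, l Z).\<close>

definition Fh :: "'a::comm_ring_1 \<Rightarrow> 'a \<Rightarrow> 'a" where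
  "Fh X Z = (X^2 - X*Z - 3*Z^2) * (X^2 + 2*X*Z - 12*Z^2)"

text \<open>A p-adic integer is represented as a coherent sequence of integers:
  x k is its residue modulo p^k, and x (k+1) reduces to x k modulo p^k
  (Z_p = inverse limit of Z/p^k Z).\<close>

definition padic_int :: "nat \<Rightarrow> (nat \<Rightarrow> int) \<Rightarrow> bool" where
  "padic_int p x \<longleftrightarrow> (\<forall>k. [x (Suc k) = x k] (mod (int p ^ k)))"

definition padic_nonzero :: "nat \<Rightarrow> (nat \<Rightarrow> int) \<Rightarrow> bool" where
  "padic_nonzero p x \<longleftrightarrow> (\<exists>k. \<not> [x k = 0] (mod (int p ^ k)))"

text \<open>After scaling by a
  suitable power of p (X,Y,Z) -> (p^m X, p^(2m) Y, p^m Z), every Q_p-point has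
  coordinates in Z_p, so a Q_p-point exists iff there are X,Y,Z in Z_p with
  (X,Z) not both zero and d Y^2 = F(X,Z) in Z_p.\<close>

definition locally_solvable_at :: "int \<Rightarrow> nat \<Rightarrow> bool" where
  "locally_solvable_at d p \<longleftrightarrow>
     (\<exists>X Y Z. padic_int p X \<and> padic_int p Y \<and> padic_int p Z \<and>
        (padic_nonzero p X \<or> padic_nonzero p Z) \<and>
        (\<forall>k. [d * (Y k)^2 = Fh (X k) (Z k)] (mod (int p ^ k))))"

definition locally_solvable_real :: "int \<Rightarrow> bool" where
  "locally_solvable_real d \<longleftrightarrow>
     (\<exists>X Y Z :: real. (X \<noteq> 0 \<or> Z \<noteq> 0) \<and> of_int d * Y^2 = Fh X Z)"

definition everywhere_locally_solvable :: "int \<Rightarrow> bool" where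
  "everywhere_locally_solvable d \<longleftrightarrow>
     locally_solvable_real d \<and> (\<forall>p. prime p \<longrightarrow> locally_solvable_at d p)"

end

(*
  Over the reals, F(x,1) = (x^2 - x - 3)(x^2 + 2x - 12) takes the values 36 and -36, so there
  are real points for every d.  Both quadratic factors have discriminant 13:
  4(x^2 - xz - 3z^2) = (2x - z)^2 - 13z^2 and x^2 + 2xz - 12z^2 = (x + z)^2 - 13z^2.

  Let p be an odd prime other than 13.  If 13 is a square mod p, Hensel's lemma gives a p-adic
  root of F and a point with y = 0.  Otherwise F(x,z) is a p-adic unit whenever x, z are not
  both divisible by p; then, for p | d, the valuation of F(X,Z) is a multiple of 4 while d Y^2
  has odd valuation, so there is no point.  For p not dividing d one of d and 13 d is a square
  mod p, and F(0,1) = 6^2, F(-1,1) = 13 give points.  By reciprocity, 13 is a square mod p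
  iff (p/13) = 1.

  At 2, F(x,z) is 1, 3, 4, 5 or 7 mod 8 when x or z is odd, which gives the same parity
  obstruction for even d; since (2/13) = -1, the condition rules out even d.  For odd d, one
  of 36, 27 = F(1,1), 13 = F(-1,1), -36 = F(-2,1) is d times a 2-adic square.  At 13,
  multiplicativity gives (d/13) = 1 if 13 does not divide d; if 13 | d one uses
  F(7,1) = 13 * 17 * 3^2 and (17/13) = 1.
*)
theory Submission
  imports Defs
begin

section \<open>Elementary number theory\<close>

lemma int_prime_not_dvd_prime:
  assumes "prime p" "prime q" "p \<noteq> q"
  shows "\<not> int p dvd int q"
  using assms primes_dvd_imp_eq by (simp only: int_dvd_int_iff) blast

lemma not_dvd_if_square_cong:
  fixes s u :: int
  assumes "[s^2 = u] (mod int p ^ k)" "0 < k" "\<not> int p dvd u"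
  shows "\<not> int p dvd s"
proof
  assume "int p dvd s"
  then have "int p dvd s^2" by (simp add: power2_eq_square)
  moreover have "int p dvd s^2 - u"
    using assms(1,2) dvd_power[of k "int p"] by (meson cong_iff_dvd_diff dvd_trans)
  ultimately have "int p dvd s^2 - (s^2 - u)" by (rule dvd_diff)
  with assms(3) show False by simp
qed

lemma dvd_both_if_not_QuadRes:
  fixes p a x z :: int
  assumes p: "prime p" and a: "\<not> QuadRes p a" and dvd: "p dvd x^2 - a * z^2"
  shows "p dvd x \<and> p dvd z"
proof (cases "p dvd z")
  case True
  then have "p dvd a * z^2" by (simp add: power2_eq_square)
  then have "p dvd x^2" using dvd by (metis diff_add_cancel dvd_add)
  then show ?thesis using True p prime_dvd_power by blast
next
  case False
  then have "coprime z p" using p prime_imp_coprime coprime_commute by blast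
  then obtain w where w: "[z * w = 1] (mod p)" using cong_solve_coprime_int by blast
  have "[x^2 * w^2 = a * z^2 * w^2] (mod p)"
    using dvd by (intro cong_mult) (simp_all add: cong_iff_dvd_diff)
  moreover have "[a * (z * w)^2 = a * 1^2] (mod p)" using w by (intro cong_mult cong_pow) simp_all
  ultimately have "[(x * w)^2 = a] (mod p)"
    by (metis (no_types, lifting) cong_trans mult.assoc power_mult_distrib power_one mult_1_right)
  with a show ?thesis unfolding QuadRes_def by blast
qed

lemma multiplicity_eq_if_cong:
  fixes a b p :: int
  assumes ab: "[a = b] (mod p ^ n)" and b: "\<not> p ^ n dvd b"
  shows "multiplicity p a = multiplicity p b"
proof (rule multiplicity_cong)
  fix r
  show "p ^ r dvd a \<longleftrightarrow> p ^ r dvd b"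
  proof (cases "r \<le> n")
    case True
    then have "[a = b] (mod p ^ r)" using ab cong_dvd_modulus le_imp_power_dvd by blast
    then show ?thesis by (rule cong_dvd_iff)
  next
    case False
    then have "p ^ n dvd p ^ r" by (simp add: le_imp_power_dvd)
    moreover have "\<not> p ^ n dvd a" using ab b cong_dvd_iff by blast
    ultimately show ?thesis using b dvd_trans by blast
  qed
qed

lemma odd_multiplicity_squarefree_times_square:
  fixes d y p :: int
  assumes p: "prime p" and d: "squarefree d" "p dvd d" and y: "y \<noteq> 0"
  shows "odd (multiplicity p (d * y^2))"
proof -
  have "d \<noteq> 0" using d by auto
  then have "multiplicity p d \<le> 1" "multiplicity p d > 0"
    using d p squarefree_factorial_semiring''[of d] prime_multiplicity_gt_zero_iff[of p d] by auto
  moreover have "multiplicity p (d * y^2) = multiplicity p d + 2 * multiplicity p y"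
    using prime_imp_prime_elem[OF p] \<open>d \<noteq> 0\<close> y
    by (simp add: prime_elem_multiplicity_mult_distrib prime_elem_multiplicity_power_distrib)
  ultimately have "multiplicity p (d * y^2) = 1 + 2 * multiplicity p y" by linarith
  then show ?thesis by simp
qed

section \<open>The Legendre symbol\<close>

lemma prime_13: "prime (13::nat)"
  by (simp add: prime_nat_iff' atLeastLessThan_upt upt_rec)

lemma Legendre_cases: "Legendre a p \<in> {-1, 0, 1}"
  by (simp add: Legendre_def)

lemma Legendre_eq_1D: "Legendre a p = 1 \<Longrightarrow> QuadRes p a \<and> \<not> p dvd a"
  by (simp add: Legendre_def cong_0_iff split: if_splits)

lemma Legendre_eqI:
  assumes p: "prime p" "2 < p" and l: "l \<in> {-1, 0, 1}"
    and cong: "[a ^ ((p - 1) div 2) = l] (mod int p)"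
  shows "Legendre a (int p) = l"
proof -
  have dvd: "int p dvd Legendre a (int p) - l"
    using cong_trans[OF euler_criterion[OF p] cong] by (simp add: cong_iff_dvd_diff)
  have small: "\<bar>Legendre a (int p) - l\<bar> < int p"
    using Legendre_cases[of a "int p"] l p(2) by auto
  show ?thesis
  proof (rule ccontr)
    assume "Legendre a (int p) \<noteq> l"
    then have "\<bar>int p\<bar> \<le> \<bar>Legendre a (int p) - l\<bar>" using dvd_imp_le_int[OF _ dvd] by simp
    with small show False by simp
  qed
qed

lemma Legendre_mult:
  assumes "prime p" "2 < p"
  shows "Legendre (a * b) (int p) = Legendre a (int p) * Legendre b (int p)"
proof (rule Legendre_eqI[OF assms])
  show "Legendre a (int p) * Legendre b (int p) \<in> {-1, 0, 1}"
    using Legendre_cases[of a "int p"] Legendre_cases[of b "int p"] by auto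
  show "[(a * b) ^ ((p - 1) div 2) = Legendre a (int p) * Legendre b (int p)] (mod int p)"
    unfolding power_mult_distrib
    using euler_criterion[OF assms] by (intro cong_mult) (simp_all add: cong_sym)
qed

lemma Legendre_reciprocity_1_mod_4:
  assumes p: "prime p" "2 < p" and q: "prime q" "q mod 4 = 1" and "p \<noteq> q"
  shows "Legendre (int p) (int q) = Legendre (int q) (int p)"
proof -
  have "q \<noteq> 2" using q(2) by auto
  then have "2 < q" using prime_ge_2_nat[OF q(1)] by simp
  have "even ((q - 1) div 2)" using q(2) by presburger
  then have "Legendre (int p) (int q) * Legendre (int q) (int p) = 1"
    using Quadratic_Reciprocity[OF p q(1) \<open>2 < q\<close> \<open>p \<noteq> q\<close>] by simp
  then show ?thesis
    using Legendre_cases[of "int p" "int q"] Legendre_cases[of "int q" "int p"] by auto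
qed

lemma Legendre_eq_1_if_prime_divisors:
  fixes n :: int
  assumes q: "prime q" "2 < q" and minus_1: "Legendre (-1) (int q) = 1"
    and "n \<noteq> 0" and "\<And>p. prime p \<Longrightarrow> int p dvd n \<Longrightarrow> Legendre (int p) (int q) = 1"
  shows "Legendre n (int q) = 1"
  using assms(4,5)
proof (induction n rule: prime_divisors_induct)
  case (unit x)
  then have "x = 1 \<or> x = -1" by auto
  moreover have "Legendre 1 (int q) = 1" using Legendre_eqI[OF q, of 1 1] by simp
  ultimately show ?case using minus_1 by auto
next
  case (factor r x)
  then have "r = int (nat r)" "prime (nat r)" by (auto simp: prime_ge_0_int)
  then have "Legendre r (int q) = 1" using factor.prems(2)[of "nat r"] by simp
  moreover have "Legendre x (int q) = 1" using factor by auto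
  ultimately show ?case using Legendre_mult[OF q] by simp
qed simp

lemma Legendre_2_13: "Legendre 2 13 = -1"
  using Legendre_eqI[OF prime_13, of "-1" 2] by (simp add: cong_def)

lemma Legendre_minus_1_13: "Legendre (-1) 13 = 1"
  using Legendre_eqI[OF prime_13, of 1 "-1"] by (simp add: cong_def)

lemma Legendre_17_13: "Legendre 17 13 = 1"
  using Legendre_eqI[OF prime_13, of 1 17] by (simp add: cong_def)

lemma Legendre_13_eq_1_iff_QuadRes:
  assumes p: "prime p" "p \<noteq> 2" "p \<noteq> 13"
  shows "Legendre (int p) 13 = 1 \<longleftrightarrow> QuadRes (int p) 13"
proof -
  have "2 < p" using p prime_ge_2_nat[of p] by simp
  then have "Legendre (int p) 13 = Legendre 13 (int p)"
    using Legendre_reciprocity_1_mod_4[OF p(1) _ prime_13 _ p(3)] by simp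
  moreover have "\<not> [13 = 0] (mod int p)"
    using int_prime_not_dvd_prime[OF p(1) prime_13 p(3)] by (simp add: cong_0_iff)
  ultimately show ?thesis by (simp add: Legendre_def)
qed

lemma Legendre_13_eq_1_if_prime_divisors:
  assumes "n \<noteq> 0" "\<not> 13 dvd n"
    and H: "\<And>p. prime p \<Longrightarrow> int p dvd n \<Longrightarrow> p \<noteq> 13 \<Longrightarrow> Legendre (int p) 13 = 1"
  shows "Legendre n 13 = 1"
proof -
  have "Legendre n (int 13) = 1"
  proof (rule Legendre_eq_1_if_prime_divisors[OF prime_13])
    fix p :: nat
    assume "prime p" "int p dvd n"
    moreover from this have "p \<noteq> 13" using assms(2) by auto
    ultimately show "Legendre (int p) (int 13) = 1" using H by simp
  qed (use assms(1) Legendre_minus_1_13 in simp_all)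
  then show ?thesis by simp
qed

section \<open>Square roots in \<open>\<int>\<^sub>p\<close>\<close>

lemma padic_int_const: "padic_int p (\<lambda>k. a)"
  by (simp add: padic_int_def)

lemma padic_int_affine: "padic_int p s \<Longrightarrow> padic_int p (\<lambda>k. a * s k + b)"
  unfolding padic_int_def by (blast intro: cong_add cong_mult cong_refl)

lemma padic_int_cong:
  assumes "padic_int p x" "K \<le> n"
  shows "[x n = x K] (mod int p ^ K)"
  using assms(2)
proof (induction n rule: dec_induct)
  case (step n)
  have "[x (Suc n) = x n] (mod int p ^ K)"
    using assms(1) step.hyps(1) unfolding padic_int_def
    by (meson cong_dvd_modulus le_imp_power_dvd)
  then show ?case using step.IH by (rule cong_trans)
qed simp

lemma padic_int_by_lifting:
  fixes P :: "nat \<Rightarrow> int \<Rightarrow> bool"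
  assumes "P 0 t\<^sub>0"
    and lift: "\<And>k t. P k t \<Longrightarrow> \<exists>t'. [t' = t] (mod int p ^ k) \<and> P (Suc k) t'"
  obtains s where "padic_int p s" "\<And>k. P k (s k)"
proof -
  define s where "s = rec_nat t\<^sub>0 (\<lambda>k t. SOME t'. [t' = t] (mod int p ^ k) \<and> P (Suc k) t')"
  have s_Suc: "s (Suc k) = (SOME t'. [t' = s k] (mod int p ^ k) \<and> P (Suc k) t')" for k
    by (simp add: s_def)
  have P: "P k (s k)" for k
  proof (induction k)
    case 0
    then show ?case using assms(1) by (simp add: s_def)
  next
    case (Suc k)
    then show ?case using someI_ex[OF lift[OF Suc]] by (simp add: s_Suc)
  qed
  have "[s (Suc k) = s k] (mod int p ^ k)" for k
    using someI_ex[OF lift[OF P[of k]]] by (simp add: s_Suc)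
  then show ?thesis using that P unfolding padic_int_def by blast
qed

definition padic_sqrt :: "nat \<Rightarrow> int \<Rightarrow> (nat \<Rightarrow> int) \<Rightarrow> bool" where
  "padic_sqrt p u s \<longleftrightarrow> padic_int p s \<and> padic_nonzero p s \<and> (\<forall>k. [s k ^ 2 = u] (mod int p ^ k))"

lemma sqrt_lift_odd:
  fixes t u :: int
  assumes p: "prime p" "p \<noteq> 2" and u: "\<not> int p dvd u"
    and t: "int p ^ Suc k dvd t^2 - u"
  shows "\<exists>t'. [t' = t] (mod int p ^ k) \<and> int p ^ Suc (Suc k) dvd t'^2 - u"
proof -
  have pi: "prime (int p)" using p by simp
  have "[t^2 = u] (mod int p ^ Suc k)" using t by (simp add: cong_iff_dvd_diff)
  then have "\<not> int p dvd t" by (rule not_dvd_if_square_cong[OF _ _ u]) simp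
  moreover have "\<not> int p dvd 2"
    using int_prime_not_dvd_prime[OF p(1) two_is_prime_nat p(2)] by simp
  ultimately have "\<not> int p dvd 2 * t" using pi by (simp add: prime_dvd_mult_iff)
  then have "coprime (2 * t) (int p)" using prime_imp_coprime[OF pi] coprime_commute by blast
  then obtain w where "[2 * t * w = 1] (mod int p)" using cong_solve_coprime_int by blast
  then have w: "int p dvd 1 - 2 * t * w" by (simp add: cong_iff_dvd_diff dvd_diff_commute)
  \<comment> \<open>Newton step for \<open>T\<^sup>2 - u\<close>; \<open>w\<close> inverts the derivative \<open>2 t\<close> modulo \<open>p\<close>\<close>
  define t' where "t' = t - (t^2 - u) * w"
  have "int p ^ k dvd t^2 - u" using dvd_trans[OF _ t, of "int p ^ k"] by simp
  then have "[t' = t] (mod int p ^ k)" unfolding t'_def cong_iff_dvd_diff by (simp add: dvd_mult2)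
  moreover have "t'^2 - u = (t^2 - u) * (1 - 2 * t * w) + (t^2 - u)^2 * w^2"
    unfolding t'_def by (simp add: power2_eq_square algebra_simps)
  moreover have "int p ^ Suc (Suc k) dvd (t^2 - u) * (1 - 2 * t * w)"
    using mult_dvd_mono[OF t w] by (simp add: mult.commute)
  moreover have "int p ^ Suc (Suc k) dvd (t^2 - u)^2"
  proof -
    have "int p ^ Suc (Suc k) dvd int p ^ (Suc k * 2)" by (rule le_imp_power_dvd) simp
    then have "int p ^ Suc (Suc k) dvd (int p ^ Suc k)^2" by (simp only: power_mult)
    then show ?thesis using t by (meson dvd_trans dvd_power_same)
  qed
  ultimately show ?thesis by (metis dvd_add dvd_mult2)
qed

lemma padic_sqrt_exists_odd:
  assumes p: "prime p" "p \<noteq> 2" and u: "\<not> int p dvd u" and q: "QuadRes (int p) u"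
  obtains s where "padic_sqrt p u s"
proof -
  from q obtain t\<^sub>0 where "[t\<^sub>0^2 = u] (mod int p)" unfolding QuadRes_def by blast
  then have "int p ^ Suc 0 dvd t\<^sub>0^2 - u" by (simp add: cong_iff_dvd_diff)
  then obtain s where s: "padic_int p s" "\<And>k. int p ^ Suc k dvd (s k)^2 - u"
    using padic_int_by_lifting[where P = "\<lambda>k t. int p ^ Suc k dvd t^2 - u", OF _ sqrt_lift_odd[OF p u]]
    by blast
  have sq: "[s k ^ 2 = u] (mod int p ^ k)" for k
    using dvd_trans[OF _ s(2)[of k], of "int p ^ k"] by (simp add: cong_iff_dvd_diff)
  have "\<not> int p dvd s 1" using not_dvd_if_square_cong[OF sq _ u] by simp
  then have "\<not> [s 1 = 0] (mod int p ^ 1)" by (simp add: cong_0_iff)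
  then show ?thesis using that s(1) sq unfolding padic_sqrt_def padic_nonzero_def by blast
qed

lemma sqrt_lift_2:
  fixes t u :: int
  assumes t: "2 ^ (k + 3) dvd t^2 - u" "odd t"
  shows "\<exists>t'. [t' = t] (mod 2 ^ k) \<and> 2 ^ (k + 4) dvd t'^2 - u \<and> odd t'"
proof -
  obtain e where e: "t^2 - u = 2 ^ (k + 3) * e" using t(1) by blast
  define t' where "t' = t + 2 ^ (k + 2) * e"
  have "[t' = t] (mod 2 ^ k)"
    unfolding t'_def cong_iff_dvd_diff by (simp add: power_add)
  moreover have "t'^2 - u = 2 ^ (k + 3) * (t + 1) * e + (2 ^ (k + 2))^2 * e^2"
    unfolding t'_def using e by (simp add: power2_eq_square algebra_simps power_add)
  moreover have "2 ^ (k + 4) dvd 2 ^ (k + 3) * (t + 1) * e"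
  proof -
    have "2 ^ (k + 3) * 2 dvd 2 ^ (k + 3) * (t + 1)"
      using t(2) by (intro mult_dvd_mono) simp_all
    then show ?thesis by (simp add: power_add dvd_mult2)
  qed
  moreover have "(2::int) ^ (k + 4) dvd (2 ^ (k + 2))^2 * e^2"
  proof -
    have "(2::int) ^ (k + 4) dvd 2 ^ ((k + 2) * 2)" by (rule le_imp_power_dvd) simp
    then show ?thesis by (simp only: power_mult dvd_mult2)
  qed
  moreover have "odd t'" using t(2) by (simp add: t'_def)
  ultimately show ?thesis by (metis dvd_add)
qed

lemma padic_sqrt_exists_2:
  assumes "[u = 1] (mod 8)"
  obtains s where "padic_sqrt 2 u s"
proof -
  have "2 ^ (0 + 3) dvd 1^2 - u \<and> odd (1::int)"
    using assms by (simp add: cong_iff_dvd_diff dvd_diff_commute)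
  moreover have "\<exists>t'. [t' = t] (mod int 2 ^ k) \<and> 2 ^ (Suc k + 3) dvd t'^2 - u \<and> odd t'"
    if "2 ^ (k + 3) dvd t^2 - u \<and> odd t" for k t
    using sqrt_lift_2[of k t u] that by (simp add: add.commute)
  ultimately obtain s where s: "padic_int 2 s" "\<And>k. 2 ^ (k + 3) dvd (s k)^2 - u \<and> odd (s k)"
    using padic_int_by_lifting[where P = "\<lambda>k t. 2 ^ (k + 3) dvd t^2 - u \<and> odd t"] by blast
  have "[s k ^ 2 = u] (mod int 2 ^ k)" for k
    using s(2)[of k] by (auto simp: cong_iff_dvd_diff power_add dest: dvd_mult_left)
  moreover have "\<not> [s 1 = 0] (mod int 2 ^ 1)" using s(2)[of 1] by (simp add: cong_0_iff)
  ultimately show ?thesis using that s(1) unfolding padic_sqrt_def padic_nonzero_def by blast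
qed

section \<open>The quartic form\<close>

lemma Fh_homogeneous: "Fh (a * x) (a * z) = a^4 * Fh x z"
  unfolding Fh_def by (simp add: power2_eq_square power4_eq_xxxx algebra_simps)

lemma Fh_cong: "[x = x'] (mod m) \<Longrightarrow> [z = z'] (mod m) \<Longrightarrow> [Fh x z = Fh x' z'] (mod m)"
  for x :: int
  unfolding Fh_def by (intro cong_mult cong_add cong_diff cong_pow) auto

lemma Fh_mod_8:
  fixes x z :: int
  assumes "odd x \<or> odd z"
  shows "Fh x z mod 8 \<in> {1, 3, 4, 5, 7}"
proof -
  define a b where "a = nat (x mod 8)" and "b = nat (z mod 8)"
  have ab: "int a = x mod 8" "int b = z mod 8" "a \<in> {..<8}" "b \<in> {..<8}"
    unfolding a_def b_def by auto
  have "Fh x z mod 8 = Fh (int a) (int b) mod 8"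
    using Fh_cong[of x "int a" 8 z "int b"] unfolding ab by (simp add: cong_def)
  moreover have "odd (x mod 8) \<or> odd (z mod 8)" using assms by presburger
  then have "odd a \<or> odd b" unfolding ab(1,2) [symmetric] by simp
  moreover have table: "\<forall>a \<in> {..<8}. \<forall>b \<in> {..<8}. odd a \<or> odd b \<longrightarrow>
      Fh (int a) (int b) mod 8 \<in> {1, 3, 4, 5, 7}"
    by (simp add: lessThan_nat_numeral Fh_def)
  ultimately show ?thesis using table[rule_format, OF ab(3,4)] by simp
qed

lemma Fh_2_adic_valuation:
  fixes x z :: int
  assumes "odd x \<or> odd z"
  shows "\<not> 2 ^ 3 dvd Fh x z \<and> even (multiplicity 2 (Fh x z))"
proof -
  have "Fh x z mod 8 \<in> {1, 3, 4, 5, 7}" using Fh_mod_8[OF assms] .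
  then have "Fh x z mod 8 = 4 \<or> odd (Fh x z)" by auto presburger+
  then show ?thesis
  proof
    assume "Fh x z mod 8 = 4"
    then have "2 ^ 2 dvd Fh x z" "\<not> 2 ^ Suc 2 dvd Fh x z" by simp_all presburger+
    then show ?thesis using multiplicity_eqI[of 2 2 "Fh x z"] by simp
  next
    assume "odd (Fh x z)"
    then show ?thesis using not_dvd_imp_multiplicity_0[of 2 "Fh x z"] by (auto dest: dvd_mult_left)
  qed
qed

lemma Fh_not_dvd_if_not_QuadRes_13:
  assumes p: "prime p" "p \<noteq> 2" and nq: "\<not> QuadRes (int p) 13"
    and prim: "\<not> (int p dvd x \<and> int p dvd z)"
  shows "\<not> int p dvd Fh x z"
proof
  assume "int p dvd Fh x z"
  moreover have "prime (int p)" using p by simp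
  ultimately have "int p dvd x^2 - x * z - 3 * z^2 \<or> int p dvd x^2 + 2 * x * z - 12 * z^2"
    unfolding Fh_def by (simp add: prime_dvd_mult_iff)
  then show False
  proof
    assume "int p dvd x^2 - x * z - 3 * z^2"
    then have "int p dvd (2 * x - z)^2 - 13 * z^2"
      using dvd_mult[of "int p" "x^2 - x * z - 3 * z^2" 4]
      by (simp add: power2_eq_square algebra_simps)
    then have "int p dvd 2 * x - z \<and> int p dvd z"
      using dvd_both_if_not_QuadRes \<open>prime (int p)\<close> nq by blast
    then have "int p dvd 2 * x" "int p dvd z" by (metis diff_add_cancel dvd_add)+
    moreover have "\<not> int p dvd 2"
      using int_prime_not_dvd_prime[OF p(1) two_is_prime_nat p(2)] by simp
    ultimately show False using prim \<open>prime (int p)\<close> by (simp add: prime_dvd_mult_iff)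
  next
    assume "int p dvd x^2 + 2 * x * z - 12 * z^2"
    then have "int p dvd (x + z)^2 - 13 * z^2" by (simp add: power2_eq_square algebra_simps)
    then have "int p dvd x + z \<and> int p dvd z"
      using dvd_both_if_not_QuadRes \<open>prime (int p)\<close> nq by blast
    then show False using prim by (metis add_diff_cancel dvd_diff)
  qed
qed

section \<open>Local points\<close>

lemma locally_solvable_real_if_nonzero:
  assumes "d \<noteq> 0"
  shows "locally_solvable_real d"
proof (cases "d > 0")
  case True
  then have "of_int d * (6 / sqrt (of_int d))^2 = Fh (0::real) 1"
    by (simp add: Fh_def power_divide)
  then show ?thesis unfolding locally_solvable_real_def by (metis one_neq_zero)
next
  case False
  with assms have "of_int d * (6 / sqrt (- of_int d))^2 = Fh (-2::real) 1"
    by (simp add: Fh_def power_divide)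
  then show ?thesis unfolding locally_solvable_real_def by (metis one_neq_zero)
qed

lemma locally_solvable_at_if_padic_sqrt:
  assumes s: "padic_sqrt p (c * d) s" and F: "Fh x\<^sub>0 1 = c * m^2"
  shows "locally_solvable_at d p"
proof -
  have "[d * (m * c * s k)^2 = Fh (x\<^sub>0 * s k) (s k)] (mod int p ^ k)" for k
  proof -
    have "[(m^2 * c * s k ^ 2) * (c * d) = (m^2 * c * s k ^ 2) * s k ^ 2] (mod int p ^ k)"
      using s unfolding padic_sqrt_def by (intro cong_mult) (auto simp: cong_sym)
    moreover have "Fh (x\<^sub>0 * s k) (s k) = (m^2 * c * s k ^ 2) * s k ^ 2"
      using Fh_homogeneous[of "s k" x\<^sub>0 1] F by (simp add: power2_eq_square power4_eq_xxxx algebra_simps)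
    ultimately show ?thesis by (simp add: power2_eq_square algebra_simps)
  qed
  moreover have "padic_int p (\<lambda>k. x\<^sub>0 * s k + 0)" "padic_int p (\<lambda>k. m * c * s k + 0)"
    using s unfolding padic_sqrt_def by (blast intro: padic_int_affine)+
  ultimately show ?thesis
    using s unfolding locally_solvable_at_def padic_sqrt_def by auto
qed

text \<open>A square root \<open>s\<close> of 13 gives the root \<open>x = (1 + s) / 2\<close> of \<open>x\<^sup>2 - x - 3\<close>,
  hence a point with \<open>y = 0\<close>.\<close>
lemma locally_solvable_at_if_padic_sqrt_13:
  assumes p: "prime p" "p \<noteq> 2" and s: "padic_sqrt p 13 s"
  shows "locally_solvable_at d p"
proof -
  have "[d * 0^2 = Fh (1 + s k) 2] (mod int p ^ k)" for k
  proof -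
    have "Fh (1 + s k) 2 = (s k ^ 2 - 13) * ((1 + s k)^2 + 4 * (1 + s k) - 48)"
      unfolding Fh_def by (simp add: power2_eq_square algebra_simps)
    moreover have "int p ^ k dvd s k ^ 2 - 13"
      using s unfolding padic_sqrt_def by (simp add: cong_iff_dvd_diff)
    ultimately show ?thesis by (simp add: cong_iff_dvd_diff)
  qed
  moreover have "padic_nonzero p (\<lambda>k. 2)"
    using int_prime_not_dvd_prime[OF p(1) two_is_prime_nat p(2)]
    unfolding padic_nonzero_def by (intro exI[of _ 1]) (simp add: cong_0_iff)
  moreover have "padic_int p (\<lambda>k. 1 * s k + 1)"
    using s unfolding padic_sqrt_def by (rule padic_int_affine[OF conjunct1])
  ultimately show ?thesis
    unfolding locally_solvable_at_def
    by (intro exI[where x = "\<lambda>k. 1 + s k"] exI[where x = "\<lambda>k. 0"] exI[where x = "\<lambda>k. 2"])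
      (simp add: padic_int_const add.commute)
qed

lemma locally_solvable_at_if_Legendre:
  assumes p: "prime p" "p \<noteq> 2" and L: "Legendre (c * d) (int p) = 1" and F: "Fh x\<^sub>0 1 = c * m^2"
  shows "locally_solvable_at d p"
proof -
  obtain s where "padic_sqrt p (c * d) s"
    using padic_sqrt_exists_odd[OF p] Legendre_eq_1D[OF L] by blast
  then show ?thesis using F by (rule locally_solvable_at_if_padic_sqrt)
qed

lemma locally_solvable_at_2_if_odd:
  assumes "odd d"
  shows "locally_solvable_at d 2"
proof -
  have "d mod 8 = 1 \<or> d mod 8 = 3 \<or> d mod 8 = 5 \<or> d mod 8 = 7" using assms by presburger
  then obtain c x\<^sub>0 m where "[c * d = 1] (mod 8)" "Fh x\<^sub>0 1 = c * m^2"
  proof (elim disjE)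
    assume "d mod 8 = 1"
    then show ?thesis by (intro that[of 1 0 6]) (simp_all add: Fh_def cong_def)
  next
    assume "d mod 8 = 3"
    then show ?thesis by (intro that[of 3 1 3]) (simp_all add: Fh_def cong_def, presburger)
  next
    assume "d mod 8 = 5"
    then show ?thesis by (intro that[of 13 "-1" 1]) (simp_all add: Fh_def cong_def, presburger)
  next
    assume "d mod 8 = 7"
    then show ?thesis by (intro that[of "-1" "-2" 6]) (simp_all add: Fh_def cong_def, presburger)
  qed
  then show ?thesis using padic_sqrt_exists_2 locally_solvable_at_if_padic_sqrt by metis
qed

lemma locally_solvable_at_odd_prime:
  assumes p: "prime p" "p \<noteq> 2" "p \<noteq> 13"
    and H: "int p dvd d \<Longrightarrow> Legendre (int p) 13 = 1"
  shows "locally_solvable_at d p"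
proof (cases "QuadRes (int p) 13")
  case True
  moreover have "\<not> int p dvd 13" using int_prime_not_dvd_prime[OF p(1) prime_13 p(3)] by simp
  ultimately obtain s where "padic_sqrt p 13 s" using padic_sqrt_exists_odd[OF p(1,2)] by blast
  then show ?thesis by (rule locally_solvable_at_if_padic_sqrt_13[OF p(1,2)])
next
  case False
  have "2 < p" using p prime_ge_2_nat[of p] by simp
  have "\<not> int p dvd d" using H False Legendre_13_eq_1_iff_QuadRes[OF p] by blast
  then have "Legendre d (int p) \<noteq> 0" by (simp add: Legendre_def cong_0_iff)
  moreover have "Legendre 13 (int p) = -1"
    using False int_prime_not_dvd_prime[OF p(1) prime_13 p(3)] by (simp add: Legendre_def cong_0_iff)
  ultimately consider "Legendre (1 * d) (int p) = 1" | "Legendre (13 * d) (int p) = 1"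
    using Legendre_cases[of d "int p"] Legendre_mult[OF p(1) \<open>2 < p\<close>, of 13 d] by fastforce
  then show ?thesis
  proof cases
    case 1
    then show ?thesis by (rule locally_solvable_at_if_Legendre[OF p(1,2) _ , of _ _ 0 6]) (simp add: Fh_def)
  next
    case 2
    then show ?thesis by (rule locally_solvable_at_if_Legendre[OF p(1,2) _ , of _ _ "-1" 1]) (simp add: Fh_def)
  qed
qed

lemma locally_solvable_at_13:
  assumes d: "squarefree d"
    and H: "\<And>p. prime p \<Longrightarrow> int p dvd d \<Longrightarrow> p \<noteq> 13 \<Longrightarrow> Legendre (int p) 13 = 1"
  shows "locally_solvable_at d 13"
proof (cases "13 dvd d")
  case False
  have "d \<noteq> 0" using d by auto
  then have "Legendre (1 * d) (int 13) = 1" using Legendre_13_eq_1_if_prime_divisors False H by simp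
  then show ?thesis
    using locally_solvable_at_if_Legendre[OF prime_13 _ _, of 1 d 0 6] by (simp add: Fh_def)
next
  case True
  then obtain d' where d': "d = 13 * d'" by blast
  have "\<not> 13 dvd d'"
  proof
    assume "13 dvd d'"
    then have "13^2 dvd d" unfolding d' power2_eq_square by (rule mult_dvd_mono[OF dvd_refl])
    with d show False using squarefreeD[of d 13] by simp
  qed
  have "d' \<noteq> 0" using d d' by auto
  then have "Legendre d' 13 = 1"
    using Legendre_13_eq_1_if_prime_divisors \<open>\<not> 13 dvd d'\<close> H d' by simp
  then have L: "Legendre (17 * d') (int 13) = 1"
    using Legendre_mult[OF prime_13, of 17 d'] Legendre_17_13 by simp
  have nd: "\<not> int 13 dvd 17 * d'" using \<open>\<not> 13 dvd d'\<close> prime_dvd_mult_iff[of 13 17 d'] by simp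
  have "(13::nat) \<noteq> 2" by simp
  \<comment> \<open>\<open>Fh 7 1 = 13 * 17 * 3\<^sup>2\<close>, and \<open>13 * 17 * d = (13 t)\<^sup>2\<close> for \<open>t\<^sup>2 = 17 d'\<close> in \<open>\<int>\<^sub>1\<^sub>3\<close>\<close>
  obtain t where t: "padic_sqrt 13 (17 * d') t"
    using padic_sqrt_exists_odd[OF prime_13 \<open>13 \<noteq> 2\<close> nd] Legendre_eq_1D[OF L] by blast
  define s where "s k = 13 * t k" for k
  have "padic_int 13 s"
    using t padic_int_affine[of 13 t 13 0] unfolding padic_sqrt_def s_def by simp
  moreover have "[s k ^ 2 = 221 * d] (mod int 13 ^ k)" for k
  proof -
    have "[169 * t k ^ 2 = 169 * (17 * d')] (mod int 13 ^ k)"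
      using t unfolding padic_sqrt_def by (intro cong_mult) auto
    then show ?thesis unfolding s_def d' by (simp add: power_mult_distrib)
  qed
  moreover have "\<not> [s 2 = 0] (mod int 13 ^ 2)"
  proof
    have "[t 2 ^ 2 = 17 * d'] (mod int 13 ^ 2)" using t unfolding padic_sqrt_def by blast
    then have "\<not> int 13 dvd t 2" by (rule not_dvd_if_square_cong[OF _ _ nd]) simp
    moreover assume "[s 2 = 0] (mod int 13 ^ 2)"
    then have "13 * 13 dvd 13 * t 2" unfolding s_def by (simp add: cong_0_iff power2_eq_square)
    ultimately show False using dvd_mult_cancel_left[of 13 13 "t 2"] by simp
  qed
  ultimately have "padic_sqrt 13 (221 * d) s"
    unfolding padic_sqrt_def padic_nonzero_def by blast
  moreover have "Fh 7 1 = 221 * (3::int)^2" by (simp add: Fh_def)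
  ultimately show ?thesis by (rule locally_solvable_at_if_padic_sqrt)
qed

lemma locally_solvable_at_if_Legendre_13:
  assumes d: "squarefree d"
    and H: "\<forall>q::nat. prime q \<and> int q dvd d \<longrightarrow> Legendre (int q) 13 = 1 \<or> q = 13"
    and p: "prime p"
  shows "locally_solvable_at d p"
proof -
  consider "p = 2" | "p = 13" | "p \<noteq> 2" "p \<noteq> 13" by blast
  then show ?thesis
  proof cases
    case 1
    have "\<not> int 2 dvd d"
    proof
      assume "int 2 dvd d"
      then have "Legendre (int 2) 13 = 1 \<or> (2::nat) = 13" using H two_is_prime_nat by blast
      with Legendre_2_13 show False by simp
    qed
    then show ?thesis using 1 locally_solvable_at_2_if_odd by simp
  next
    case 2
    have "Legendre (int q) 13 = 1" if "prime q" "int q dvd d" "q \<noteq> 13" for q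
      using H that by blast
    then show ?thesis using 2 locally_solvable_at_13[OF d] by simp
  next
    case 3
    then show ?thesis using H p by (intro locally_solvable_at_odd_prime) auto
  qed
qed

section \<open>The local obstruction\<close>

lemma padic_int_primitive_scaling:
  assumes X: "padic_int p X" and Z: "padic_int p Z" and nz: "padic_nonzero p X \<or> padic_nonzero p Z"
  obtains m K where "\<And>n. K \<le> n \<Longrightarrow>
    \<exists>x z. X n = int p ^ m * x \<and> Z n = int p ^ m * z \<and> \<not> (int p dvd x \<and> int p dvd z)"
proof -
  obtain K where "\<not> (int p ^ K dvd X K \<and> int p ^ K dvd Z K)"
    using nz unfolding padic_nonzero_def by (auto simp: cong_0_iff)
  let ?both = "\<lambda>j. int p ^ j dvd X K \<and> int p ^ j dvd Z K"
  obtain k where k: "k \<le> K" "\<not> ?both k" "\<And>i. i < k \<Longrightarrow> ?both i"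
    using ex_least_nat_le[where P = "\<lambda>j. \<not> ?both j"] \<open>\<not> ?both K\<close> by blast
  then obtain m where m: "k = Suc m" by (cases k) auto
  have "\<exists>x z. X n = int p ^ m * x \<and> Z n = int p ^ m * z \<and> \<not> (int p dvd x \<and> int p dvd z)"
    if "K \<le> n" for n
  proof -
    have cong_j: "[X n = X K] (mod int p ^ j)" "[Z n = Z K] (mod int p ^ j)" if "j \<le> K" for j
      using padic_int_cong[OF X \<open>K \<le> n\<close>] padic_int_cong[OF Z \<open>K \<le> n\<close>] that
      by (meson cong_dvd_modulus le_imp_power_dvd)+
    have "m \<le> K" "Suc m \<le> K" using k(1) m by simp_all
    note cong_m = cong_j[OF \<open>m \<le> K\<close>] and cong_Suc_m = cong_j[OF \<open>Suc m \<le> K\<close>]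
    have "int p ^ m dvd X n" "int p ^ m dvd Z n"
      using k(3)[of m] m cong_m cong_dvd_iff by blast+
    then obtain x z where xz: "X n = int p ^ m * x" "Z n = int p ^ m * z" by (meson dvdE)
    have "\<not> (int p dvd x \<and> int p dvd z)"
    proof
      assume "int p dvd x \<and> int p dvd z"
      then have "int p ^ Suc m dvd X n \<and> int p ^ Suc m dvd Z n"
        unfolding xz by (simp add: mult_dvd_mono)
      then show False using k(2) m cong_Suc_m cong_dvd_iff by blast
    qed
    with xz show ?thesis by blast
  qed
  then show ?thesis using that by blast
qed

text \<open>On a \<open>p\<close>-primitive pair the valuation of \<open>Fh\<close> is even and bounded, so by
  homogeneity the valuation of \<open>Fh\<close> at a point of \<open>\<int>\<^sub>p\<^sup>2 - {0}\<close> is even, whereas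
  \<open>d y\<^sup>2\<close> has odd valuation.\<close>
lemma not_locally_solvable_at_if_even_multiplicity:
  assumes p: "prime p" and d: "squarefree d" "int p dvd d"
    and even_val: "\<And>x z. \<not> (int p dvd x \<and> int p dvd z) \<Longrightarrow>
      \<not> int p ^ Suc N dvd Fh x z \<and> even (multiplicity (int p) (Fh x z))"
  shows "\<not> locally_solvable_at d p"
proof
  assume "locally_solvable_at d p"
  then obtain X Y Z where X: "padic_int p X" and Z: "padic_int p Z"
    and nz: "padic_nonzero p X \<or> padic_nonzero p Z"
    and eq: "\<And>k. [d * (Y k)^2 = Fh (X k) (Z k)] (mod int p ^ k)"
    unfolding locally_solvable_at_def by blast
  obtain m K where scaling: "\<And>n. K \<le> n \<Longrightarrow>
      \<exists>x z. X n = int p ^ m * x \<and> Z n = int p ^ m * z \<and> \<not> (int p dvd x \<and> int p dvd z)"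
    using padic_int_primitive_scaling[OF X Z nz] by blast
  define n where "n = K + 4 * m + N + 1"
  obtain x z where xz: "X n = int p ^ m * x" "Z n = int p ^ m * z"
    and prim: "\<not> (int p dvd x \<and> int p dvd z)"
    using scaling[of n] n_def by auto
  define v where "v = multiplicity (int p) (Fh x z)"
  have pe: "prime_elem (int p)" and nu: "\<not> is_unit (int p)" using p by auto
  have ndvd: "\<not> int p ^ Suc N dvd Fh x z" and "even v"
    using even_val[OF prim] unfolding v_def by auto
  then have "Fh x z \<noteq> 0" by auto
  have "v < Suc N" unfolding v_def by (rule multiplicity_lessI[OF \<open>Fh x z \<noteq> 0\<close> nu ndvd])
  have F: "Fh (X n) (Z n) = int p ^ (4 * m) * Fh x z"
    unfolding xz Fh_homogeneous by (simp add: power_mult [symmetric] mult.commute)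
  have "Fh (X n) (Z n) \<noteq> 0" using F \<open>Fh x z \<noteq> 0\<close> p by simp
  have val_F: "multiplicity (int p) (Fh (X n) (Z n)) = 4 * m + v"
    unfolding F v_def using pe \<open>Fh x z \<noteq> 0\<close>
    by (simp add: prime_elem_multiplicity_mult_distrib)
  moreover have "\<not> n \<le> 4 * m + v" using \<open>v < Suc N\<close> n_def by simp
  ultimately have F_ndvd: "\<not> int p ^ n dvd Fh (X n) (Z n)"
    using power_dvd_iff_le_multiplicity[OF \<open>Fh (X n) (Z n) \<noteq> 0\<close> nu] by simp
  have val_dY: "multiplicity (int p) (d * (Y n)^2) = 4 * m + v"
    using multiplicity_eq_if_cong[OF eq F_ndvd] val_F by simp
  have "Y n \<noteq> 0"
  proof
    assume "Y n = 0"
    then have "int p ^ n dvd Fh (X n) (Z n)" using eq[of n] by (simp add: cong_iff_dvd_diff)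
    with F_ndvd show False ..
  qed
  then have "odd (multiplicity (int p) (d * (Y n)^2))"
    using odd_multiplicity_squarefree_times_square p d by simp
  with val_dY \<open>even v\<close> show False by simp
qed

lemma Legendre_13_if_locally_solvable_at:
  assumes d: "squarefree d" and p: "prime p" "int p dvd d" and solvable: "locally_solvable_at d p"
  shows "Legendre (int p) 13 = 1 \<or> p = 13"
proof (rule ccontr)
  assume contra: "\<not> (Legendre (int p) 13 = 1 \<or> p = 13)"
  show False
  proof (cases "p = 2")
    case True
    have "\<not> locally_solvable_at d 2"
    proof (rule not_locally_solvable_at_if_even_multiplicity[where N = 2])
      fix x z :: int
      assume "\<not> (int 2 dvd x \<and> int 2 dvd z)"
      then show "\<not> int 2 ^ Suc 2 dvd Fh x z \<and> even (multiplicity (int 2) (Fh x z))"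
        using Fh_2_adic_valuation[of x z] by simp
    qed (use d p True in simp_all)
    with solvable True show False by simp
  next
    case False
    then have "\<not> QuadRes (int p) 13" using contra Legendre_13_eq_1_iff_QuadRes[OF p(1) False] by blast
    have "\<not> locally_solvable_at d p"
    proof (rule not_locally_solvable_at_if_even_multiplicity[where N = 0, OF p(1) d p(2)])
      fix x z :: int
      assume "\<not> (int p dvd x \<and> int p dvd z)"
      then have "\<not> int p dvd Fh x z"
        using Fh_not_dvd_if_not_QuadRes_13[OF p(1) False \<open>\<not> QuadRes (int p) 13\<close>] by blast
      then show "\<not> int p ^ Suc 0 dvd Fh x z \<and> even (multiplicity (int p) (Fh x z))"
        by (simp add: not_dvd_imp_multiplicity_0)
    qed
    with solvable show False by simp
  qed
qed

theorem mainTheorem4: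
  fixes d :: int
  assumes "squarefree d"
  shows "everywhere_locally_solvable d \<longleftrightarrow>
           (\<forall>p::nat. prime p \<and> int p dvd d \<longrightarrow> Legendre (int p) 13 = 1 \<or> p = 13)"
proof
  assume "everywhere_locally_solvable d"
  then show "\<forall>p::nat. prime p \<and> int p dvd d \<longrightarrow> Legendre (int p) 13 = 1 \<or> p = 13"
    using Legendre_13_if_locally_solvable_at[OF assms]
    unfolding everywhere_locally_solvable_def by blast
next
  assume "\<forall>p::nat. prime p \<and> int p dvd d \<longrightarrow> Legendre (int p) 13 = 1 \<or> p = 13"
  moreover have "d \<noteq> 0" using assms by auto
  ultimately show "everywhere_locally_solvable d"
    unfolding everywhere_locally_solvable_def
    using locally_solvable_at_if_Legendre_13[OF assms] locally_solvable_real_if_nonzero by blast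
qed

end
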